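(* Let $(X,d)$ be a metric space, $\mu$ a non-atomic Borel measure on $X$, $m$ a Borel measure on $X$ and $0<p<\infty$. If a function $f:X\to\mathbb R$ has a $p$-weak upper gradient $\rho\in L^p(m)$, then $f$ is $ACC_p$.
   Context: A path is a continuous map $\gamma:[a,b]\to X$; a subpath is a restriction to a subinterval, trivial if that interval is a point; $\mathrm{Im}(\gamma)=\gamma([a,b])$. $\mu$ non-atomic: $\mu(\{x\})=0$ for all $x$. $\Gamma^\mu$ is the set of all non-trivial injective paths $\gamma$ with $0<\mu(\mathrm{Im}(\tilde\gamma))<\infty$ for every non-trivial subpath $\tilde\gamma$. For Borel $g\ge0$, $\int_\gamma g:=\int_{\mathrm{Im}(\gamma)}g\,d\mu$. For $\gamma:[a,b]\to X$ in $\Gamma^\mu$, $h(\gamma)=\mu(\mathrm{Im}(\gamma))$ and $\nu_\gamma(x)=\mu(\gamma([a,x]))$ is a bijection of $[a,b]$ onto $[0,h(\gamma)]$; the $\mu$-arc length parametrization is $\gamma_h=\gamma\circ\nu_\gamma^{-1}:[0,h(\gamma)]\to X$. For $\Gamma\subset\Gamma^\mu$, $\mathrm{Mod}_p(\Gamma)=\inf\int_Xg^p\,dm$ over Borel $g\ge0$ with $\int_\gamma g\ge1$ for all $\gamma\in\Gamma$; "$p$-almost every path" means all paths of $\Gamma^\mu$ outside a family of $p$-modulus zero. A Borel $\rho\ge0$ is a $p$-weak upper gradient of $f$ if $|f(x)-f(y)|\le\int_\gamma\rho$ for $p$-almost every $\gamma\in\Gamma^\mu$ with endpoints $x,y$.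 $f$ is $ACC_p$ if $f\circ\gamma_h:[0,h(\gamma)]\to\mathbb R$ is absolutely continuous for $p$-almost every $\gamma\in\Gamma^\mu$. *)

theory Defs
  imports "HOL-Analysis.Analysis"
begin

text \<open>A path is represented by a triple (a, b, g): the map g restricted to the compact
  interval {a..b}.  Only the values of g on {a..b} are ever used.\<close>
type_synonym 'a path_t = "real \<times> real \<times> (real \<Rightarrow> 'a)"

definition path_im :: "'a path_t \<Rightarrow> 'a set" where
  "path_im P = (case P of (a, b, g) \<Rightarrow> g ` {a..b})"

definition non_atomic :: "'a measure \<Rightarrow> bool" where
  "non_atomic \<mu> \<longleftrightarrow> (\<forall>x. emeasure \<mu> {x} = 0)"

definition Gamma_mu :: "'a::metric_space measure \<Rightarrow> 'a path_t set" where
  "Gamma_mu \<mu> = {(a, b, g). a < b \<and> continuous_on {a..b} g \<and> inj_on g {a..b} \<and>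
      (\<forall>c d. a \<le> c \<and> c < d \<and> d \<le> b \<longrightarrow>
          0 < emeasure \<mu> (g ` {c..d}) \<and> emeasure \<mu> (g ` {c..d}) < \<infinity>)}"

definition line_int :: "'a measure \<Rightarrow> ('a \<Rightarrow> ennreal) \<Rightarrow> 'a path_t \<Rightarrow> ennreal" where
  "line_int \<mu> g P = (\<integral>\<^sup>+ x \<in> path_im P. g x \<partial>\<mu>)"

definition epow :: "ennreal \<Rightarrow> real \<Rightarrow> ennreal" where
  "epow x p = (if x = top then top else ennreal (enn2real x powr p))"

definition Mod_p :: "'a::metric_space measure \<Rightarrow> 'a measure \<Rightarrow> real \<Rightarrow> 'a path_t set \<Rightarrow> ennreal" where
  "Mod_p \<mu> m p \<Gamma> = (INF g \<in> {g :: 'a \<Rightarrow> ennreal. g \<in> borel_measurable borel \<and>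
        (\<forall>P\<in>\<Gamma>. line_int \<mu> g P \<ge> 1)}. \<integral>\<^sup>+ x. epow (g x) p \<partial>m)"

definition p_ae_path :: "'a::metric_space measure \<Rightarrow> 'a measure \<Rightarrow> real \<Rightarrow> ('a path_t \<Rightarrow> bool) \<Rightarrow> bool" where
  "p_ae_path \<mu> m p Q \<longleftrightarrow> (\<exists>\<Gamma>0 \<subseteq> Gamma_mu \<mu>. Mod_p \<mu> m p \<Gamma>0 = 0 \<and>
        (\<forall>P \<in> Gamma_mu \<mu> - \<Gamma>0. Q P))"

definition p_weak_upper_gradient :: "'a::metric_space measure \<Rightarrow> 'a measure \<Rightarrow> real \<Rightarrow>
    ('a \<Rightarrow> real) \<Rightarrow> ('a \<Rightarrow> real) \<Rightarrow> bool" where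
  "p_weak_upper_gradient \<mu> m p f \<rho> \<longleftrightarrow>
     \<rho> \<in> borel_measurable borel \<and> (\<forall>x. 0 \<le> \<rho> x) \<and>
     p_ae_path \<mu> m p (\<lambda>(a, b, g). ennreal \<bar>f (g a) - f (g b)\<bar> \<le> line_int \<mu> (\<lambda>x. ennreal (\<rho> x)) (a, b, g))"

definition abs_cont_on :: "real \<Rightarrow> real \<Rightarrow> (real \<Rightarrow> real) \<Rightarrow> bool" where
  "abs_cont_on s t F \<longleftrightarrow> (\<forall>\<epsilon>>0. \<exists>\<delta>>0. \<forall>(n::nat) (u::nat \<Rightarrow> real) v.
      (\<forall>i<n. s \<le> u i \<and> u i \<le> v i \<and> v i \<le> t) \<and>
      (\<forall>i<n. \<forall>j<n. i \<noteq> j \<longrightarrow> v i \<le> u j \<or> v j \<le> u i) \<and>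
      (\<Sum>i<n. v i - u i) < \<delta> \<longrightarrow> (\<Sum>i<n. \<bar>F (v i) - F (u i)\<bar>) < \<epsilon>)"

definition h_len :: "'a measure \<Rightarrow> 'a path_t \<Rightarrow> real" where
  "h_len \<mu> P = measure \<mu> (path_im P)"

definition nu_path :: "'a measure \<Rightarrow> 'a path_t \<Rightarrow> real \<Rightarrow> real" where
  "nu_path \<mu> P = (case P of (a, b, g) \<Rightarrow> (\<lambda>x. measure \<mu> (g ` {a..x})))"

definition arc_param :: "'a measure \<Rightarrow> 'a path_t \<Rightarrow> real \<Rightarrow> 'a" where
  "arc_param \<mu> P = (case P of (a, b, g) \<Rightarrow> g \<circ> inv_into {a..b} (nu_path \<mu> P))"

definition ACC_p :: "'a::metric_space measure \<Rightarrow> 'a measure \<Rightarrow> real \<Rightarrow> ('a \<Rightarrow> real) \<Rightarrow> bool" where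
  "ACC_p \<mu> m p f \<longleftrightarrow> p_ae_path \<mu> m p (\<lambda>P. abs_cont_on 0 (h_len \<mu> P) (f \<circ> arc_param \<mu> P))"

end

theory Submission
  imports Defs
begin

text \<open>Two families of paths have p-modulus zero: the paths having a subpath in the exceptional
  family of the upper gradient inequality (every function admissible for that family is
  admissible for them), and the paths along which \<rho> has infinite integral (c \<rho> is admissible
  for every c > 0 and has energy c^p times that of \<rho>). Every other path is reparametrized by
  \<mu>-arc length, which is possible since \<mu> is non-atomic, so \<nu>_\<gamma> is continuous. The increment of
  f along the reparametrized path over an interval (u, v] is then bounded by the integral of \<rho>
  over the image of (u, v], a set of \<mu>-measure v - u, and non-overlapping intervals have
  disjoint images. Absolute continuity thus follows from absolute continuity of the finite
  integral of \<rho> over the image of the path.\<close>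

section \<open>Modulus of path families\<close>

definition admissible :: "'a::topological_space measure \<Rightarrow> 'a path_t set \<Rightarrow> ('a \<Rightarrow> ennreal) \<Rightarrow> bool" where
  "admissible \<mu> \<Gamma> g \<longleftrightarrow> g \<in> borel_measurable borel \<and> (\<forall>P\<in>\<Gamma>. 1 \<le> line_int \<mu> g P)"

lemma Mod_p_le_admissible:
  "admissible \<mu> \<Gamma> g \<Longrightarrow> Mod_p \<mu> m p \<Gamma> \<le> (\<integral>\<^sup>+ x. epow (g x) p \<partial>m)"
  unfolding Mod_p_def admissible_def by (intro INF_lower) auto

lemma Mod_p_eq_0D:
  assumes "Mod_p \<mu> m p \<Gamma> = 0" "0 < e"
  obtains g where "admissible \<mu> \<Gamma> g" "(\<integral>\<^sup>+ x. epow (g x) p \<partial>m) < e"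
proof -
  have "Mod_p \<mu> m p \<Gamma> < e" using assms by simp
  then show ?thesis using that unfolding Mod_p_def INF_less_iff admissible_def by auto
qed

lemma Mod_p_eq_0I:
  assumes "\<And>e::real. 0 < e \<Longrightarrow> Mod_p \<mu> m p \<Gamma> \<le> ennreal e"
  shows "Mod_p \<mu> m p \<Gamma> = 0"
proof -
  have "Mod_p \<mu> m p \<Gamma> \<le> 0"
    by (rule ennreal_le_epsilon) (simp add: assms)
  then show ?thesis by simp
qed

lemma Mod_p_mono_admissible:
  assumes "\<And>g. admissible \<mu> \<Gamma> g \<Longrightarrow> admissible \<mu> \<Gamma>' g"
  shows "Mod_p \<mu> m p \<Gamma>' \<le> Mod_p \<mu> m p \<Gamma>"
  unfolding Mod_p_def by (rule INF_superset_mono) (use assms in \<open>auto simp: admissible_def\<close>)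

lemma Mod_p_mono: "\<Gamma> \<subseteq> \<Gamma>' \<Longrightarrow> Mod_p \<mu> m p \<Gamma> \<le> Mod_p \<mu> m p \<Gamma>'"
  by (rule Mod_p_mono_admissible) (auto simp: admissible_def)

lemma line_int_mono: "(\<And>x. g x \<le> g' x) \<Longrightarrow> line_int \<mu> g P \<le> line_int \<mu> g' P"
  unfolding line_int_def by (intro nn_integral_mono) (simp add: mult_right_mono)

lemma epow_max_le_add: "epow (max x y) p \<le> epow x p + epow y p"
  by (simp add: max_def add_increasing add_increasing2)

lemma borel_measurable_epow:
  assumes "g \<in> borel_measurable borel" "sets m = sets borel"
  shows "(\<lambda>x. epow (g x) p) \<in> borel_measurable m"
proof -
  have "g \<in> borel_measurable m" using assms measurable_cong_sets by blast
  then show ?thesis unfolding epow_def by measurable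
qed

lemma Mod_p_Un_eq_0:
  assumes "sets m = sets borel" "Mod_p \<mu> m p A = 0" "Mod_p \<mu> m p B = 0"
  shows "Mod_p \<mu> m p (A \<union> B) = 0"
proof (rule Mod_p_eq_0I)
  fix e :: real assume "0 < e"
  then have e2: "0 < ennreal (e/2)" by simp
  obtain gA where gA: "admissible \<mu> A gA" "(\<integral>\<^sup>+ x. epow (gA x) p \<partial>m) < ennreal (e/2)"
    using Mod_p_eq_0D[OF assms(2) e2] .
  obtain gB where gB: "admissible \<mu> B gB" "(\<integral>\<^sup>+ x. epow (gB x) p \<partial>m) < ennreal (e/2)"
    using Mod_p_eq_0D[OF assms(3) e2] .
  have meas: "gA \<in> borel_measurable borel" "gB \<in> borel_measurable borel"
    using gA(1) gB(1) by (auto simp: admissible_def)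
  have "1 \<le> line_int \<mu> (\<lambda>x. max (gA x) (gB x)) P" if "P \<in> A \<union> B" for P
  proof -
    have "1 \<le> max (line_int \<mu> gA P) (line_int \<mu> gB P)"
      using that gA(1) gB(1) by (auto simp: admissible_def le_max_iff_disj)
    also have "\<dots> \<le> line_int \<mu> (\<lambda>x. max (gA x) (gB x)) P"
      by (intro max.boundedI line_int_mono) auto
    finally show ?thesis .
  qed
  then have "admissible \<mu> (A \<union> B) (\<lambda>x. max (gA x) (gB x))"
    using meas by (auto simp: admissible_def)
  then have "Mod_p \<mu> m p (A \<union> B) \<le> (\<integral>\<^sup>+ x. epow (max (gA x) (gB x)) p \<partial>m)"
    by (rule Mod_p_le_admissible)
  also have "\<dots> \<le> (\<integral>\<^sup>+ x. epow (gA x) p + epow (gB x) p \<partial>m)"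
    by (intro nn_integral_mono epow_max_le_add)
  also have "\<dots> = (\<integral>\<^sup>+ x. epow (gA x) p \<partial>m) + (\<integral>\<^sup>+ x. epow (gB x) p \<partial>m)"
    using meas by (intro nn_integral_add borel_measurable_epow assms(1))
  also have "\<dots> \<le> ennreal (e/2) + ennreal (e/2)" using gA(2) gB(2) by (intro add_mono) auto
  also have "\<dots> = ennreal e" using \<open>0 < e\<close> by (simp flip: ennreal_plus)
  finally show "Mod_p \<mu> m p (A \<union> B) \<le> ennreal e" .
qed

lemma path_im_in_sets_borel:
  assumes "P \<in> Gamma_mu \<mu>" shows "path_im P \<in> sets borel"
proof -
  obtain a b g where P: "P = (a, b, g)" by (cases P) auto
  then have "compact (g ` {a..b})"
    using assms by (intro compact_continuous_image) (simp_all add: Gamma_mu_def)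
  then show ?thesis unfolding P path_im_def by (simp add: compact_imp_closed)
qed

lemma Mod_p_line_int_eq_top_le:
  assumes "sets \<mu> = sets borel" "sets m = sets borel"
    and \<rho>: "\<rho> \<in> borel_measurable borel" "\<And>x. 0 \<le> \<rho> x" and "0 < c"
  shows "Mod_p \<mu> m p {P \<in> Gamma_mu \<mu>. line_int \<mu> (\<lambda>x. ennreal (\<rho> x)) P = \<infinity>}
    \<le> ennreal (c powr p) * (\<integral>\<^sup>+ x. ennreal (\<rho> x powr p) \<partial>m)"
    (is "Mod_p \<mu> m p ?\<Gamma> \<le> _")
proof -
  have "1 \<le> line_int \<mu> (\<lambda>x. ennreal (c * \<rho> x)) P" if "P \<in> ?\<Gamma>" for P
  proof -
    have [measurable]: "path_im P \<in> sets \<mu>"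
      using path_im_in_sets_borel[of P \<mu>] that assms(1) by simp
    have [measurable]: "\<rho> \<in> borel_measurable \<mu>"
      using \<rho>(1) assms(1) measurable_cong_sets by blast
    have "line_int \<mu> (\<lambda>x. ennreal (c * \<rho> x)) P = ennreal c * line_int \<mu> (\<lambda>x. ennreal (\<rho> x)) P"
      unfolding line_int_def using \<open>0 < c\<close> \<rho>(2)
      by (subst nn_integral_cmult[symmetric]) (auto simp: ennreal_mult mult.assoc intro!: nn_integral_cong)
    then show ?thesis using that \<open>0 < c\<close> by (simp add: ennreal_mult_top)
  qed
  then have "admissible \<mu> ?\<Gamma> (\<lambda>x. ennreal (c * \<rho> x))"
    unfolding admissible_def using \<rho>(1) by auto
  then have "Mod_p \<mu> m p ?\<Gamma> \<le> (\<integral>\<^sup>+ x. epow (ennreal (c * \<rho> x)) p \<partial>m)"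
    by (rule Mod_p_le_admissible)
  also have "\<dots> = (\<integral>\<^sup>+ x. ennreal (c powr p) * ennreal (\<rho> x powr p) \<partial>m)"
  proof (intro nn_integral_cong)
    fix x
    have "epow (ennreal (c * \<rho> x)) p = ennreal ((c * \<rho> x) powr p)"
      using \<open>0 < c\<close> \<rho>(2)[of x] by (simp add: epow_def del: ennreal_mult)
    then show "epow (ennreal (c * \<rho> x)) p = ennreal (c powr p) * ennreal (\<rho> x powr p)"
      using \<open>0 < c\<close> \<rho>(2)[of x] by (simp add: powr_mult ennreal_mult)
  qed
  also have "\<dots> = ennreal (c powr p) * (\<integral>\<^sup>+ x. ennreal (\<rho> x powr p) \<partial>m)"
  proof (intro nn_integral_cmult)
    have [measurable]: "\<rho> \<in> borel_measurable m"
      using \<rho>(1) assms(2) measurable_cong_sets by blast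
    show "(\<lambda>x. ennreal (\<rho> x powr p)) \<in> borel_measurable m" by measurable
  qed
  finally show ?thesis .
qed

lemma Mod_p_line_int_eq_top:
  assumes "0 < p" "sets \<mu> = sets borel" "sets m = sets borel"
    and \<rho>: "\<rho> \<in> borel_measurable borel" "\<And>x. 0 \<le> \<rho> x"
    and "(\<integral>\<^sup>+ x. ennreal (\<rho> x powr p) \<partial>m) < \<infinity>"
  shows "Mod_p \<mu> m p {P \<in> Gamma_mu \<mu>. line_int \<mu> (\<lambda>x. ennreal (\<rho> x)) P = \<infinity>} = 0"
proof (rule Mod_p_eq_0I)
  fix e :: real assume "0 < e"
  obtain C where C: "0 \<le> C" "(\<integral>\<^sup>+ x. ennreal (\<rho> x powr p) \<partial>m) = ennreal C"
    using assms(6) by (cases "\<integral>\<^sup>+ x. ennreal (\<rho> x powr p) \<partial>m") auto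
  define c where "c = (e / (C + 1)) powr (1 / p)"
  have "0 < c" unfolding c_def using \<open>0 < e\<close> C(1) by simp
  have "c powr p * (C + 1) = e"
    unfolding c_def using \<open>0 < e\<close> C(1) assms(1) by (simp add: powr_powr)
  then have "c powr p * C + c powr p = e" by (simp add: distrib_left)
  then have "c powr p * C \<le> e"
    using powr_ge_zero[of c p] by linarith
  then show "Mod_p \<mu> m p {P \<in> Gamma_mu \<mu>. line_int \<mu> (\<lambda>x. ennreal (\<rho> x)) P = \<infinity>} \<le> ennreal e"
    using Mod_p_line_int_eq_top_le[OF assms(2-5) \<open>0 < c\<close>, of p] C
    by (simp add: ennreal_mult[symmetric] ennreal_leI order_trans)
qed

lemma Mod_p_paths_with_subpath_in_le:
  "Mod_p \<mu> m p {(a, b, g). \<exists>c d. a \<le> c \<and> c < d \<and> d \<le> b \<and> (c, d, g) \<in> \<Gamma>} \<le> Mod_p \<mu> m p \<Gamma>"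
proof (rule Mod_p_mono_admissible)
  fix h assume h: "admissible \<mu> \<Gamma> h"
  have "1 \<le> line_int \<mu> h (a, b, g)"
    if "a \<le> c" "c < d" "d \<le> b" "(c, d, g) \<in> \<Gamma>" for a b c d g
  proof -
    have "1 \<le> line_int \<mu> h (c, d, g)" using h that(4) by (simp add: admissible_def)
    also have "\<dots> \<le> line_int \<mu> h (a, b, g)"
      unfolding line_int_def path_im_def using that(1,3)
      by (intro nn_integral_mono) (auto split: split_indicator)
    finally show ?thesis .
  qed
  then show "admissible \<mu> {(a, b, g). \<exists>c d. a \<le> c \<and> c < d \<and> d \<le> b \<and> (c, d, g) \<in> \<Gamma>} h"
    using h unfolding admissible_def by blast
qed

lemma subpath_in_Gamma_mu:
  assumes "(a, b, g) \<in> Gamma_mu \<mu>" "a \<le> c" "c < d" "d \<le> b"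
  shows "(c, d, g) \<in> Gamma_mu \<mu>"
proof -
  have "{c..d} \<subseteq> {a..b}" using assms by auto
  then show ?thesis using assms unfolding Gamma_mu_def
    by (auto intro: continuous_on_subset inj_on_subset)
qed

lemma p_ae_path_mono:
  assumes "p_ae_path \<mu> m p Q" "\<And>P. P \<in> Gamma_mu \<mu> \<Longrightarrow> Q P \<Longrightarrow> Q' P"
  shows "p_ae_path \<mu> m p Q'"
  using assms unfolding p_ae_path_def by blast

lemma p_ae_path_conj:
  assumes "sets m = sets borel" "p_ae_path \<mu> m p Q" "p_ae_path \<mu> m p Q'"
  shows "p_ae_path \<mu> m p (\<lambda>P. Q P \<and> Q' P)"
proof -
  obtain \<Gamma> \<Gamma>' where "\<Gamma> \<subseteq> Gamma_mu \<mu>" "Mod_p \<mu> m p \<Gamma> = 0" "\<forall>P \<in> Gamma_mu \<mu> - \<Gamma>. Q P"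
    and "\<Gamma>' \<subseteq> Gamma_mu \<mu>" "Mod_p \<mu> m p \<Gamma>' = 0" "\<forall>P \<in> Gamma_mu \<mu> - \<Gamma>'. Q' P"
    using assms(2,3) unfolding p_ae_path_def by blast
  then show ?thesis
    unfolding p_ae_path_def using Mod_p_Un_eq_0[OF assms(1)] by (intro exI[of _ "\<Gamma> \<union> \<Gamma>'"]) auto
qed

lemma p_ae_path_subpaths:
  assumes "p_ae_path \<mu> m p Q"
  shows "p_ae_path \<mu> m p (\<lambda>(a, b, g). \<forall>c d. a \<le> c \<longrightarrow> c < d \<longrightarrow> d \<le> b \<longrightarrow> Q (c, d, g))"
proof -
  obtain \<Gamma>\<^sub>0 where "\<Gamma>\<^sub>0 \<subseteq> Gamma_mu \<mu>" and null: "Mod_p \<mu> m p \<Gamma>\<^sub>0 = 0"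
    and Q: "\<And>P. P \<in> Gamma_mu \<mu> - \<Gamma>\<^sub>0 \<Longrightarrow> Q P"
    using assms unfolding p_ae_path_def by blast
  define \<Gamma> where "\<Gamma> = {(a, b, g). \<exists>c d. a \<le> c \<and> c < d \<and> d \<le> b \<and> (c, d, g) \<in> \<Gamma>\<^sub>0}"
  have "Mod_p \<mu> m p (Gamma_mu \<mu> \<inter> \<Gamma>) \<le> Mod_p \<mu> m p \<Gamma>\<^sub>0"
    using Mod_p_mono[of "Gamma_mu \<mu> \<inter> \<Gamma>" \<Gamma>] Mod_p_paths_with_subpath_in_le[of \<mu> m p \<Gamma>\<^sub>0]
    unfolding \<Gamma>_def by (meson inf_le2 order_trans)
  then have "Mod_p \<mu> m p (Gamma_mu \<mu> \<inter> \<Gamma>) = 0" using null by simp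
  moreover have "Q (c, d, g)"
    if "(a, b, g) \<in> Gamma_mu \<mu>" "(a, b, g) \<notin> \<Gamma>" "a \<le> c" "c < d" "d \<le> b" for a b c d g
    using that subpath_in_Gamma_mu[of a b g \<mu> c d] Q[of "(c, d, g)"] unfolding \<Gamma>_def by blast
  ultimately show ?thesis
    unfolding p_ae_path_def by (intro exI[of _ "Gamma_mu \<mu> \<inter> \<Gamma>"]) fastforce
qed

lemma p_ae_path_line_int_finite:
  assumes "0 < p" "sets \<mu> = sets borel" "sets m = sets borel"
    and "\<rho> \<in> borel_measurable borel" "\<And>x. 0 \<le> \<rho> x"
    and "(\<integral>\<^sup>+ x. ennreal (\<rho> x powr p) \<partial>m) < \<infinity>"
  shows "p_ae_path \<mu> m p (\<lambda>P. line_int \<mu> (\<lambda>x. ennreal (\<rho> x)) P < \<infinity>)"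
  unfolding p_ae_path_def using Mod_p_line_int_eq_top[OF assms]
  by (intro exI[of _ "{P \<in> Gamma_mu \<mu>. line_int \<mu> (\<lambda>x. ennreal (\<rho> x)) P = \<infinity>}"])
    (auto simp: less_top)

section \<open>Absolute continuity of the integral\<close>

lemma nn_integral_excess_over_level_small:
  fixes r :: "'b \<Rightarrow> real"
  assumes [measurable]: "r \<in> borel_measurable M" "S \<in> sets M"
    and "\<And>x. 0 \<le> r x" and fin: "(\<integral>\<^sup>+x\<in>S. ennreal (r x) \<partial>M) < \<infinity>" and "0 < e"
  obtains n :: nat where "(\<integral>\<^sup>+x\<in>S. ennreal (max (r x - real n) 0) \<partial>M) < e"
proof -
  define q where "q n x = ennreal (max (r x - real n) 0) * indicator S x" for n :: nat and x
  have [measurable]: "q n \<in> borel_measurable M" for n unfolding q_def by measurable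
  have dec: "decseq q"
    unfolding q_def by (intro decseq_SucI le_funI mult_right_mono ennreal_leI) auto
  have "(\<integral>\<^sup>+ x. q n x \<partial>M) \<le> (\<integral>\<^sup>+ x. q 0 x \<partial>M)" for n
    using decseqD[OF dec, of 0 n] by (intro nn_integral_mono) (simp add: le_fun_def)
  moreover have "(\<integral>\<^sup>+ x. q 0 x \<partial>M) < \<infinity>"
    using fin assms(3) unfolding q_def by (simp add: max_absorb1)
  ultimately have q_fin: "(\<integral>\<^sup>+ x. q n x \<partial>M) < \<infinity>" for n
    by (meson le_less_trans)
  have "(INF n. q n x) \<le> q (nat \<lceil>r x\<rceil>) x" for x by (rule INF_lower) simp
  then have q_INF: "(INF n. q n x) = 0" for x
    unfolding q_def by (simp add: max_absorb2 real_nat_ceiling_ge)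
  have "(INF n. integral\<^sup>N M (q n)) = (\<integral>\<^sup>+ x. (INF n. q n x) \<partial>M)"
    using nn_integral_monotone_convergence_INF_decseq[OF dec _ q_fin] by simp
  then have "(INF n. integral\<^sup>N M (q n)) < e" using \<open>0 < e\<close> by (simp add: q_INF)
  then show ?thesis using that unfolding INF_less_iff q_def by auto
qed

lemma nn_integral_small_on_small_sets:
  fixes r :: "'b \<Rightarrow> real"
  assumes [measurable]: "r \<in> borel_measurable M" "S \<in> sets M"
    and r_nonneg: "\<And>x. 0 \<le> r x" and "(\<integral>\<^sup>+x\<in>S. ennreal (r x) \<partial>M) < \<infinity>" and "0 < e"
  shows "\<exists>\<delta>>0. \<forall>A\<in>sets M. A \<subseteq> S \<longrightarrow> emeasure M A < ennreal \<delta> \<longrightarrow>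
    (\<integral>\<^sup>+x\<in>A. ennreal (r x) \<partial>M) < ennreal e"
proof -
  have "0 < ennreal (e / 2)" using \<open>0 < e\<close> by simp
  then obtain n :: nat where n: "(\<integral>\<^sup>+x\<in>S. ennreal (max (r x - real n) 0) \<partial>M) < ennreal (e / 2)"
    using nn_integral_excess_over_level_small[OF assms(1-4)] by blast
  define \<delta> where "\<delta> = e / (2 * (real n + 1))"
  have "0 < \<delta>" unfolding \<delta>_def using \<open>0 < e\<close> by simp
  have n\<delta>: "real n * \<delta> \<le> e / 2" unfolding \<delta>_def using \<open>0 < e\<close> by (simp add: field_simps)
  show ?thesis
  proof (intro exI[of _ \<delta>] conjI \<open>0 < \<delta>\<close> ballI impI)
    fix A assume [measurable]: "A \<in> sets M" and "A \<subseteq> S" and A_small: "emeasure M A < ennreal \<delta>"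
    have "ennreal (r x) * indicator A x
        \<le> ennreal (real n) * indicator A x + ennreal (max (r x - real n) 0) * indicator S x" for x
    proof -
      have "ennreal (r x) \<le> ennreal (real n) + ennreal (max (r x - real n) 0)"
        by (simp flip: ennreal_plus add: ennreal_leI)
      then show ?thesis using \<open>A \<subseteq> S\<close> by (auto split: split_indicator)
    qed
    then have "(\<integral>\<^sup>+x\<in>A. ennreal (r x) \<partial>M)
        \<le> ennreal (real n) * emeasure M A + (\<integral>\<^sup>+x\<in>S. ennreal (max (r x - real n) 0) \<partial>M)"
      by (subst nn_integral_cmult_indicator[symmetric], simp, subst nn_integral_add[symmetric])
        (auto intro: nn_integral_mono)
    also have "\<dots> \<le> ennreal (real n * \<delta>) + (\<integral>\<^sup>+x\<in>S. ennreal (max (r x - real n) 0) \<partial>M)"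
      using A_small \<open>0 < \<delta>\<close> by (intro add_right_mono) (simp add: ennreal_mult mult_left_mono)
    also have "\<dots> < ennreal (real n * \<delta>) + ennreal (e / 2)"
      using n by (simp add: ennreal_add_left_cancel_less)
    also have "\<dots> = ennreal (real n * \<delta> + e / 2)"
      using \<open>0 < \<delta>\<close> \<open>0 < e\<close> by (intro ennreal_plus[symmetric]) simp_all
    also have "\<dots> \<le> ennreal e"
      using n\<delta> by (intro ennreal_leI) simp
    finally show "(\<integral>\<^sup>+x\<in>A. ennreal (r x) \<partial>M) < ennreal e" .
  qed
qed

section \<open>Parametrization by \<mu>-arc length\<close>

lemma INT_cball_inverse_Suc: "(\<Inter>n. cball x (inverse (real (Suc n)))) = {x}"
proof (intro equalityI subsetI)
  fix y assume "y \<in> (\<Inter>n. cball x (inverse (real (Suc n))))"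
  then have "dist x y \<le> inverse (real (Suc n))" for n by auto
  then show "y \<in> {x}" using reals_Archimedean[of "dist x y"] by (force simp: not_less[symmetric])
qed auto

locale Gamma_mu_path =
  fixes \<mu> :: "'a::metric_space measure" and a b :: real and g :: "real \<Rightarrow> 'a"
  assumes sets_eq_borel: "sets \<mu> = sets borel" and non_atomic: "non_atomic \<mu>"
    and in_Gamma_mu: "(a, b, g) \<in> Gamma_mu \<mu>"
begin

lemma a_less_b: "a < b" and continuous: "continuous_on {a..b} g" and inj: "inj_on g {a..b}"
  and emeasure_image_pos: "\<And>c d. a \<le> c \<Longrightarrow> c < d \<Longrightarrow> d \<le> b \<Longrightarrow> 0 < emeasure \<mu> (g ` {c..d})"
  and emeasure_nontrivial_image_finite: "\<And>c d. a \<le> c \<Longrightarrow> c < d \<Longrightarrow> d \<le> b \<Longrightarrow> emeasure \<mu> (g ` {c..d}) < \<infinity>"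
  using in_Gamma_mu by (auto simp: Gamma_mu_def)

lemma singleton_null: "{x} \<in> null_sets \<mu>"
  using non_atomic sets_eq_borel by (auto simp: non_atomic_def null_sets_def)

lemma image_in_sets: "a \<le> c \<Longrightarrow> d \<le> b \<Longrightarrow> g ` {c..d} \<in> sets \<mu>"
  using sets_eq_borel compact_continuous_image[OF continuous_on_subset[OF continuous]]
  by (simp add: compact_imp_closed)

lemma emeasure_image_finite:
  assumes "a \<le> c" "d \<le> b" shows "emeasure \<mu> (g ` {c..d}) < \<infinity>"
proof (cases "c < d")
  case False
  then have "{c..d} \<subseteq> {c}" by auto
  then have "g ` {c..d} \<subseteq> {g c}" by blast
  then have "g ` {c..d} \<in> null_sets \<mu>"
    using assms image_in_sets singleton_null null_sets_subset by blast
  then show ?thesis by (simp add: null_setsD1)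
qed (use assms emeasure_nontrivial_image_finite in auto)

lemma image_greaterThanAtMost:
  assumes "a \<le> c" "d \<le> b" shows "g ` {c<..d} = g ` {c..d} - {g c}"
proof -
  have "g x \<noteq> g c" if "c < x" "x \<le> d" for x
    using inj assms that unfolding inj_on_def by (metis atLeastAtMost_iff less_eq_real_def order_trans less_irrefl)
  then show ?thesis
    by (auto simp: image_iff) (metis atLeastAtMost_iff greaterThanAtMost_iff order_less_le)
qed

lemma image_greaterThanAtMost_in_sets:
  "a \<le> c \<Longrightarrow> d \<le> b \<Longrightarrow> g ` {c<..d} \<in> sets \<mu>"
  using image_greaterThanAtMost image_in_sets null_setsD2[OF singleton_null] by auto

lemma emeasure_image_greaterThanAtMost:
  "a \<le> c \<Longrightarrow> d \<le> b \<Longrightarrow> emeasure \<mu> (g ` {c<..d}) = emeasure \<mu> (g ` {c..d})"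
  using image_greaterThanAtMost image_in_sets singleton_null by (simp add: emeasure_Diff_null_set)

lemma nn_integral_image_greaterThanAtMost:
  assumes "a \<le> c" "d \<le> b"
  shows "(\<integral>\<^sup>+x\<in>g ` {c<..d}. w x \<partial>\<mu>) = (\<integral>\<^sup>+x\<in>g ` {c..d}. w x \<partial>\<mu>)"
proof (rule nn_integral_cong_AE)
  show "AE x in \<mu>. w x * indicator (g ` {c<..d}) x = w x * indicator (g ` {c..d}) x"
    using AE_not_in[OF singleton_null[of "g c"]]
    by eventually_elim (simp add: image_greaterThanAtMost[OF assms] split: split_indicator)
qed

definition mu_len :: "real \<Rightarrow> real \<Rightarrow> real" where
  "mu_len c d = measure \<mu> (g ` {c..d})"

lemma emeasure_image_eq_mu_len: "a \<le> c \<Longrightarrow> d \<le> b \<Longrightarrow> emeasure \<mu> (g ` {c..d}) = ennreal (mu_len c d)"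
  unfolding mu_len_def using emeasure_image_finite by (intro emeasure_eq_ennreal_measure) (simp add: less_top)

lemma mu_len_add:
  assumes "a \<le> c" "c \<le> d" "d \<le> e" "e \<le> b" shows "mu_len c e = mu_len c d + mu_len d e"
proof -
  have "g ` {c..e} = g ` {c..d} \<union> g ` {d<..e}"
    using assms by (subst image_Un[symmetric]) (auto intro: arg_cong[where f = "image g"])
  moreover have "g ` {c..d} \<inter> g ` {d<..e} = {}"
    using assms inj unfolding inj_on_def by fastforce
  ultimately have "emeasure \<mu> (g ` {c..e}) = emeasure \<mu> (g ` {c..d}) + emeasure \<mu> (g ` {d<..e})"
    using assms image_in_sets image_greaterThanAtMost_in_sets by (simp add: plus_emeasure)
  then have "ennreal (mu_len c e) = ennreal (mu_len c d) + ennreal (mu_len d e)"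
    using assms by (simp add: emeasure_image_greaterThanAtMost emeasure_image_eq_mu_len)
  then show ?thesis by (simp add: mu_len_def flip: ennreal_plus)
qed

lemma mu_len_pos: "a \<le> c \<Longrightarrow> c < d \<Longrightarrow> d \<le> b \<Longrightarrow> 0 < mu_len c d"
  using emeasure_image_pos[of c d] emeasure_image_eq_mu_len[of c d] by simp

lemma mu_len_refl: "mu_len c c = 0"
  using null_setsD1[OF singleton_null[of "g c"]] by (simp add: mu_len_def measure_def)

lemma mu_len_from_start_strict_mono:
  "a \<le> x \<Longrightarrow> x < y \<Longrightarrow> y \<le> b \<Longrightarrow> mu_len a x < mu_len a y"
  using mu_len_add[of a x y] mu_len_pos[of x y] by simp

lemma mu_len_small_near:
  assumes x: "a \<le> x" "x \<le> b" and "0 < e"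
  shows "\<exists>\<delta>>0. \<forall>y\<in>{a..b}. \<bar>y - x\<bar> < \<delta> \<longrightarrow> mu_len (min x y) (max x y) < e"
proof -
  define r where "r n = inverse (real (Suc n))" for n
  define I where "I n = {a..b} \<inter> cball x (r n)" for n
  have I_eq: "I n = {max a (x - r n) .. min b (x + r n)}" for n
    unfolding I_def cball_eq_atLeastAtMost by auto
  have "r n \<le> r m" if "m \<le> n" for m n unfolding r_def using that by (simp add: field_simps)
  then have dec: "decseq (\<lambda>n. g ` I n)"
    unfolding decseq_def I_def by (auto intro!: image_mono dest: subset_cball)
  have "(\<Inter>n. I n) = {x}"
    using INT_cball_inverse_Suc[of x] x unfolding I_def r_def by auto
  moreover have "I n \<subseteq> {a..b}" for n unfolding I_def by auto
  ultimately have "(\<Inter>n. g ` I n) = {g x}"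
    using image_INT[OF inj, of UNIV I 0] by auto
  moreover have "range (\<lambda>n. g ` I n) \<subseteq> sets \<mu>" and "emeasure \<mu> (g ` I n) \<noteq> \<infinity>" for n
    using image_in_sets emeasure_image_finite x unfolding I_eq by (auto simp: less_top)
  ultimately have "(\<lambda>n. measure \<mu> (g ` I n)) \<longlonglongrightarrow> measure \<mu> {g x}"
    using Lim_measure_decseq[OF _ dec] by metis
  moreover have "measure \<mu> {g x} = 0"
    using null_setsD1[OF singleton_null[of "g x"]] by (simp add: measure_def)
  ultimately obtain n where n: "measure \<mu> (g ` I n) < e"
    using \<open>0 < e\<close> by (metis order_tendstoD(2) eventually_sequentially order_refl)
  show ?thesis
  proof (intro exI[of _ "r n"] conjI ballI impI)
    show "0 < r n" unfolding r_def by simp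
    fix y assume y: "y \<in> {a..b}" "\<bar>y - x\<bar> < r n"
    have "g ` {min x y..max x y} \<subseteq> g ` I n" unfolding I_eq using y x by (intro image_mono) auto
    then have "mu_len (min x y) (max x y) \<le> measure \<mu> (g ` I n)"
      unfolding mu_len_def I_eq using x y image_in_sets emeasure_image_finite
      by (intro measure_mono_fmeasurable) (auto intro: fmeasurableI)
    then show "mu_len (min x y) (max x y) < e" using n by simp
  qed
qed

lemma continuous_on_mu_len_from_start: "continuous_on {a..b} (mu_len a)"
  unfolding continuous_on_iff
proof (intro ballI allI impI)
  fix x e :: real assume x: "x \<in> {a..b}" and "0 < e"
  then obtain \<delta> where "\<delta> > 0" and \<delta>: "\<forall>y\<in>{a..b}. \<bar>y - x\<bar> < \<delta> \<longrightarrow> mu_len (min x y) (max x y) < e"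
    using mu_len_small_near[of x e] by auto
  have "\<bar>mu_len a y - mu_len a x\<bar> = mu_len (min x y) (max x y)" if "y \<in> {a..b}" for y
    using x that mu_len_add[of a x y] mu_len_add[of a y x] mu_len_pos[of x y] mu_len_pos[of y x]
    by (cases "x \<le> y") (auto simp: mu_len_def)
  then show "\<exists>d>0. \<forall>y\<in>{a..b}. dist y x < d \<longrightarrow> dist (mu_len a y) (mu_len a x) < e"
    using \<open>\<delta> > 0\<close> \<delta> by (auto simp: dist_real_def)
qed

definition arclen_inv :: "real \<Rightarrow> real" where
  "arclen_inv = inv_into {a..b} (mu_len a)"

lemma arclen_inv:
  assumes "0 \<le> u" "u \<le> mu_len a b"
  shows "arclen_inv u \<in> {a..b}" and "mu_len a (arclen_inv u) = u"
proof -
  have "u \<in> mu_len a ` {a..b}"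
    using IVT'[of "mu_len a" a u b] assms a_less_b continuous_on_mu_len_from_start
    by (force simp: mu_len_refl)
  then show "arclen_inv u \<in> {a..b}" "mu_len a (arclen_inv u) = u"
    unfolding arclen_inv_def by (simp_all only: inv_into_into f_inv_into_f)
qed

lemma arclen_inv_mono:
  assumes "0 \<le> u" "u \<le> v" "v \<le> mu_len a b"
  shows "arclen_inv u \<le> arclen_inv v"
  using arclen_inv[of u] arclen_inv[of v] mu_len_from_start_strict_mono[of "arclen_inv v" "arclen_inv u"]
    assms by force

lemma arc_param_eq: "arc_param \<mu> (a, b, g) u = g (arclen_inv u)"
  by (simp add: arc_param_def nu_path_def arclen_inv_def mu_len_def[abs_def])

lemma h_len_eq: "h_len \<mu> (a, b, g) = mu_len a b"
  by (simp add: h_len_def mu_len_def path_im_def)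

lemma arclen_inv_interval:
  assumes "0 \<le> u" "u \<le> v" "v \<le> mu_len a b"
  shows "a \<le> arclen_inv u" "arclen_inv u \<le> arclen_inv v" "arclen_inv v \<le> b"
  using arclen_inv(1)[of u] arclen_inv(1)[of v] arclen_inv_mono[of u v] assms by auto

text \<open>Half-open intervals make the images of non-overlapping intervals disjoint.\<close>

definition arc_image :: "real \<Rightarrow> real \<Rightarrow> 'a set" where
  "arc_image u v = g ` {arclen_inv u<..arclen_inv v}"

lemma arc_image_in_sets: "0 \<le> u \<Longrightarrow> u \<le> v \<Longrightarrow> v \<le> mu_len a b \<Longrightarrow> arc_image u v \<in> sets \<mu>"
  unfolding arc_image_def using arclen_inv_interval image_greaterThanAtMost_in_sets by simp

lemma arc_image_subset: "0 \<le> u \<Longrightarrow> u \<le> v \<Longrightarrow> v \<le> mu_len a b \<Longrightarrow> arc_image u v \<subseteq> g ` {a..b}"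
  unfolding arc_image_def using arclen_inv_interval[of u v] by (intro image_mono) auto

lemma emeasure_arc_image:
  assumes "0 \<le> u" "u \<le> v" "v \<le> mu_len a b"
  shows "emeasure \<mu> (arc_image u v) = ennreal (v - u)"
proof -
  have "mu_len (arclen_inv u) (arclen_inv v) = v - u"
    using mu_len_add[of a "arclen_inv u" "arclen_inv v"] arclen_inv_interval[OF assms]
      arclen_inv(2)[of u] arclen_inv(2)[of v] assms a_less_b by simp
  then show ?thesis
    using arclen_inv_interval[OF assms] unfolding arc_image_def
    by (simp add: emeasure_image_greaterThanAtMost emeasure_image_eq_mu_len)
qed

lemma disjoint_arc_images:
  assumes "0 \<le> u" "u \<le> v" "v \<le> u'" "u' \<le> v'" "v' \<le> mu_len a b"
  shows "arc_image u v \<inter> arc_image u' v' = {}"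
proof -
  have "v \<le> mu_len a b" "0 \<le> u'" "u' \<le> mu_len a b" using assms by linarith+
  then have "a \<le> arclen_inv u" "arclen_inv u \<le> arclen_inv v" "arclen_inv v \<le> arclen_inv u'"
    "arclen_inv u' \<le> arclen_inv v'" "arclen_inv v' \<le> b"
    using arclen_inv_interval[OF assms(1,2)] arclen_inv_interval[OF _ assms(4,5)]
      arclen_inv_mono[of v u'] assms(1-3) by auto
  then have "{arclen_inv u<..arclen_inv v} \<inter> {arclen_inv u'<..arclen_inv v'} = {}"
    and "{arclen_inv u<..arclen_inv v} \<subseteq> {a..b}" "{arclen_inv u'<..arclen_inv v'} \<subseteq> {a..b}"
    by auto
  then show ?thesis unfolding arc_image_def by (simp flip: inj_on_image_Int[OF inj])
qed

lemma emeasure_UN_arc_images_le: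
  fixes n :: nat
  assumes "\<forall>i<n. 0 \<le> u i \<and> u i \<le> v i \<and> v i \<le> mu_len a b"
  shows "emeasure \<mu> (\<Union>i<n. arc_image (u i) (v i)) \<le> ennreal (\<Sum>i<n. v i - u i)"
proof -
  have "emeasure \<mu> (\<Union>i<n. arc_image (u i) (v i)) \<le> (\<Sum>i<n. emeasure \<mu> (arc_image (u i) (v i)))"
    using assms by (intro emeasure_subadditive_finite finite_lessThan) (auto intro!: arc_image_in_sets)
  also have "\<dots> = (\<Sum>i<n. ennreal (v i - u i))"
    using assms emeasure_arc_image by simp
  also have "\<dots> = ennreal (\<Sum>i<n. v i - u i)"
    using assms by (intro sum_ennreal) auto
  finally show ?thesis .
qed

lemma increment_le_nn_integral_arc_image:
  fixes f \<rho> :: "'a \<Rightarrow> real"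
  assumes upper_gradient: "\<And>c d. a \<le> c \<Longrightarrow> c < d \<Longrightarrow> d \<le> b \<Longrightarrow>
      ennreal \<bar>f (g c) - f (g d)\<bar> \<le> line_int \<mu> (\<lambda>x. ennreal (\<rho> x)) (c, d, g)"
    and "0 \<le> u" "u \<le> v" "v \<le> mu_len a b"
  shows "ennreal \<bar>f (arc_param \<mu> (a, b, g) v) - f (arc_param \<mu> (a, b, g) u)\<bar>
    \<le> (\<integral>\<^sup>+x\<in>arc_image u v. ennreal (\<rho> x) \<partial>\<mu>)"
proof (cases "arclen_inv u < arclen_inv v")
  case True
  note uv = arclen_inv_interval[OF assms(2-4)]
  have "ennreal \<bar>f (g (arclen_inv v)) - f (g (arclen_inv u))\<bar>
      = ennreal \<bar>f (g (arclen_inv u)) - f (g (arclen_inv v))\<bar>"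
    by (subst abs_minus_commute) (rule refl)
  also have "\<dots> \<le> (\<integral>\<^sup>+x\<in>g ` {arclen_inv u..arclen_inv v}. ennreal (\<rho> x) \<partial>\<mu>)"
    using upper_gradient[OF uv(1) True uv(3)] unfolding line_int_def path_im_def by simp
  also have "\<dots> = (\<integral>\<^sup>+x\<in>arc_image u v. ennreal (\<rho> x) \<partial>\<mu>)"
    using uv by (simp add: nn_integral_image_greaterThanAtMost arc_image_def)
  finally show ?thesis by (simp only: arc_param_eq)
next
  case False
  then have "arclen_inv u = arclen_inv v" using arclen_inv_interval[OF assms(2-4)] by simp
  have "u = mu_len a (arclen_inv u)" using arclen_inv(2)[of u] assms by simp
  also have "\<dots> = mu_len a (arclen_inv v)" using \<open>arclen_inv u = arclen_inv v\<close> by simp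
  also have "\<dots> = v" using arclen_inv(2)[of v] assms by simp
  finally have "f (arc_param \<mu> (a, b, g) v) - f (arc_param \<mu> (a, b, g) u) = 0" by simp
  then show ?thesis by (simp only: abs_zero ennreal_0 zero_le)
qed

lemma sum_increments_le_nn_integral_UN_arc_images:
  fixes f \<rho> :: "'a \<Rightarrow> real" and n :: nat
  assumes "\<rho> \<in> borel_measurable borel"
    and upper_gradient: "\<And>c d. a \<le> c \<Longrightarrow> c < d \<Longrightarrow> d \<le> b \<Longrightarrow>
      ennreal \<bar>f (g c) - f (g d)\<bar> \<le> line_int \<mu> (\<lambda>x. ennreal (\<rho> x)) (c, d, g)"
    and bounds: "\<forall>i<n. 0 \<le> u i \<and> u i \<le> v i \<and> v i \<le> mu_len a b"
    and nonoverlapping: "\<forall>i<n. \<forall>j<n. i \<noteq> j \<longrightarrow> v i \<le> u j \<or> v j \<le> u i"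
  shows "ennreal (\<Sum>i<n. \<bar>f (arc_param \<mu> (a, b, g) (v i)) - f (arc_param \<mu> (a, b, g) (u i))\<bar>)
    \<le> (\<integral>\<^sup>+x\<in>(\<Union>i<n. arc_image (u i) (v i)). ennreal (\<rho> x) \<partial>\<mu>)"
proof -
  have [measurable]: "\<rho> \<in> borel_measurable \<mu>"
    using assms(1) sets_eq_borel measurable_cong_sets by blast
  have "disjoint_family_on (\<lambda>i. arc_image (u i) (v i)) {..<n}"
    unfolding disjoint_family_on_def
  proof (intro ballI impI)
    fix i j assume "i \<in> {..<n}" "j \<in> {..<n}" "i \<noteq> j"
    then consider "v i \<le> u j" | "v j \<le> u i" using nonoverlapping by auto
    then show "arc_image (u i) (v i) \<inter> arc_image (u j) (v j) = {}"
    proof cases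
      case 1
      then show ?thesis using bounds \<open>i \<in> {..<n}\<close> \<open>j \<in> {..<n}\<close>
        by (intro disjoint_arc_images) auto
    next
      case 2
      then have "arc_image (u j) (v j) \<inter> arc_image (u i) (v i) = {}"
        using bounds \<open>i \<in> {..<n}\<close> \<open>j \<in> {..<n}\<close> by (intro disjoint_arc_images) auto
      then show ?thesis by blast
    qed
  qed
  have "ennreal (\<Sum>i<n. \<bar>f (arc_param \<mu> (a, b, g) (v i)) - f (arc_param \<mu> (a, b, g) (u i))\<bar>)
      = (\<Sum>i<n. ennreal \<bar>f (arc_param \<mu> (a, b, g) (v i)) - f (arc_param \<mu> (a, b, g) (u i))\<bar>)"
    by (intro sum_ennreal[symmetric]) simp
  also have "\<dots> \<le> (\<Sum>i<n. (\<integral>\<^sup>+x\<in>arc_image (u i) (v i). ennreal (\<rho> x) \<partial>\<mu>))"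
  proof (intro sum_mono)
    fix i assume "i \<in> {..<n}"
    then show "ennreal \<bar>f (arc_param \<mu> (a, b, g) (v i)) - f (arc_param \<mu> (a, b, g) (u i))\<bar>
        \<le> (\<integral>\<^sup>+x\<in>arc_image (u i) (v i). ennreal (\<rho> x) \<partial>\<mu>)"
      using bounds by (intro increment_le_nn_integral_arc_image upper_gradient) auto
  qed
  also have "\<dots> = (\<integral>\<^sup>+x. (\<Sum>i<n. ennreal (\<rho> x) * indicator (arc_image (u i) (v i)) x) \<partial>\<mu>)"
    using bounds arc_image_in_sets by (intro nn_integral_sum[symmetric]) auto
  also have "\<dots> = (\<integral>\<^sup>+x\<in>(\<Union>i<n. arc_image (u i) (v i)). ennreal (\<rho> x) \<partial>\<mu>)"
    using \<open>disjoint_family_on _ {..<n}\<close>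
    by (intro nn_integral_cong) (simp add: indicator_UN_disjoint sum_distrib_left)
  finally show ?thesis .
qed

lemma abs_cont_on_arc_param:
  fixes f \<rho> :: "'a \<Rightarrow> real"
  assumes \<rho>: "\<rho> \<in> borel_measurable borel" "\<And>x. 0 \<le> \<rho> x"
    and upper_gradient: "\<And>c d. a \<le> c \<Longrightarrow> c < d \<Longrightarrow> d \<le> b \<Longrightarrow>
      ennreal \<bar>f (g c) - f (g d)\<bar> \<le> line_int \<mu> (\<lambda>x. ennreal (\<rho> x)) (c, d, g)"
    and finite: "line_int \<mu> (\<lambda>x. ennreal (\<rho> x)) (a, b, g) < \<infinity>"
  shows "abs_cont_on 0 (h_len \<mu> (a, b, g)) (f \<circ> arc_param \<mu> (a, b, g))"
  unfolding abs_cont_on_def h_len_eq comp_def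
proof (intro allI impI)
  fix e :: real assume "0 < e"
  have [measurable]: "\<rho> \<in> borel_measurable \<mu>" "g ` {a..b} \<in> sets \<mu>"
    using \<rho>(1) sets_eq_borel measurable_cong_sets image_in_sets by auto
  obtain \<delta> where "\<delta> > 0" and \<delta>: "\<And>A. A \<in> sets \<mu> \<Longrightarrow> A \<subseteq> g ` {a..b} \<Longrightarrow>
      emeasure \<mu> A < ennreal \<delta> \<Longrightarrow> (\<integral>\<^sup>+x\<in>A. ennreal (\<rho> x) \<partial>\<mu>) < ennreal e"
    using nn_integral_small_on_small_sets[of \<rho> \<mu> "g ` {a..b}" e] \<rho>(2) finite \<open>0 < e\<close>
    by (auto simp: line_int_def path_im_def)
  show "\<exists>\<delta>>0. \<forall>(n::nat) (u::nat \<Rightarrow> real) v. (\<forall>i<n. 0 \<le> u i \<and> u i \<le> v i \<and> v i \<le> mu_len a b) \<and>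
      (\<forall>i<n. \<forall>j<n. i \<noteq> j \<longrightarrow> v i \<le> u j \<or> v j \<le> u i) \<and> (\<Sum>i<n. v i - u i) < \<delta> \<longrightarrow>
      (\<Sum>i<n. \<bar>f (arc_param \<mu> (a, b, g) (v i)) - f (arc_param \<mu> (a, b, g) (u i))\<bar>) < e"
  proof (intro exI[of _ \<delta>] conjI \<open>0 < \<delta>\<close> allI impI, elim conjE)
    fix n :: nat and u v :: "nat \<Rightarrow> real"
    assume bounds: "\<forall>i<n. 0 \<le> u i \<and> u i \<le> v i \<and> v i \<le> mu_len a b"
      and nonoverlapping: "\<forall>i<n. \<forall>j<n. i \<noteq> j \<longrightarrow> v i \<le> u j \<or> v j \<le> u i"
      and "(\<Sum>i<n. v i - u i) < \<delta>"
    have "ennreal (\<Sum>i<n. v i - u i) < ennreal \<delta>"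
      using \<open>(\<Sum>i<n. v i - u i) < \<delta>\<close> bounds by (subst ennreal_less_iff) (auto intro: sum_nonneg)
    with emeasure_UN_arc_images_le[OF bounds]
    have "emeasure \<mu> (\<Union>i<n. arc_image (u i) (v i)) < ennreal \<delta>" by (rule order.strict_trans1)
    then have "(\<integral>\<^sup>+x\<in>(\<Union>i<n. arc_image (u i) (v i)). ennreal (\<rho> x) \<partial>\<mu>) < ennreal e"
      using bounds by (intro \<delta> sets.finite_UN finite_lessThan UN_least arc_image_in_sets arc_image_subset) auto
    with sum_increments_le_nn_integral_UN_arc_images[OF \<rho>(1) upper_gradient bounds nonoverlapping]
    have "ennreal (\<Sum>i<n. \<bar>f (arc_param \<mu> (a, b, g) (v i)) - f (arc_param \<mu> (a, b, g) (u i))\<bar>)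
        < ennreal e" by (rule order.strict_trans1)
    then show "(\<Sum>i<n. \<bar>f (arc_param \<mu> (a, b, g) (v i)) - f (arc_param \<mu> (a, b, g) (u i))\<bar>) < e"
      by (subst (asm) ennreal_less_iff) auto
  qed
qed

end

theorem lemma3p6:
  fixes \<mu> m :: "'a::metric_space measure" and p :: real
    and f \<rho> :: "'a \<Rightarrow> real"
  assumes "sets \<mu> = sets borel" and "non_atomic \<mu>"
    and "sets m = sets borel"
    and "0 < p"
    and "p_weak_upper_gradient \<mu> m p f \<rho>"
    and "(\<integral>\<^sup>+ x. ennreal (\<rho> x powr p) \<partial>m) < \<infinity>"
  shows "ACC_p \<mu> m p f"
proof -
  have \<rho>: "\<rho> \<in> borel_measurable borel" "\<And>x. 0 \<le> \<rho> x"
    and upper_gradient: "p_ae_path \<mu> m p (\<lambda>(a, b, g).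
      ennreal \<bar>f (g a) - f (g b)\<bar> \<le> line_int \<mu> (\<lambda>x. ennreal (\<rho> x)) (a, b, g))"
    using assms(5) unfolding p_weak_upper_gradient_def by auto
  have "p_ae_path \<mu> m p (\<lambda>P. (\<lambda>(a, b, g). \<forall>c d. a \<le> c \<longrightarrow> c < d \<longrightarrow> d \<le> b \<longrightarrow>
        ennreal \<bar>f (g c) - f (g d)\<bar> \<le> line_int \<mu> (\<lambda>x. ennreal (\<rho> x)) (c, d, g)) P
      \<and> line_int \<mu> (\<lambda>x. ennreal (\<rho> x)) P < \<infinity>)"
    using p_ae_path_conj[OF assms(3) p_ae_path_subpaths[OF upper_gradient]
        p_ae_path_line_int_finite[OF assms(4,1,3) \<rho> assms(6)]] by simp
  then show ?thesis
    unfolding ACC_p_def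
    by (rule p_ae_path_mono, clarify)
      (auto intro!: Gamma_mu_path.abs_cont_on_arc_param Gamma_mu_path.intro assms(1,2) \<rho>)
qed

end
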